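(* Let $m\ge2$ and $n\ge1$ be integers, let $a\in\mathbb{R}\setminus\mathbb{Z}^-$ (where $\mathbb{Z}^-=\{k\in\mathbb{Z}:k\le0\}$), and let $\mathcal{H}_n$ be the $m$-order $n$-dimensional generalized Hilbert tensor with entries $$\mathcal{H}_{i_1\cdots i_m}=\frac{1}{i_1+\cdots+i_m-m+a},\quad i_1,\dots,i_m\in\{1,\dots,n\}.$$ Let $$M(a)=\begin{cases}\frac1a, & a>0,\\ \frac{1}{\min\{a-[a],\,1+[a]-a\}}, & -m(n-1)<a<0,\\ \frac{1}{-m(n-1)-a}, & a<-m(n-1),\end{cases}$$ where $[a]$ denotes the largest integer not exceeding $a$. Then (i) if $m$ is even, $|\lambda|\le M(a)\,n^{m-1}$ for every $H$-eigenvalue $\lambda$ of $\mathcal{H}_n$; (ii) $|\mu|\le M(a)\,n^{\frac m2}$ for every $Z$-eigenvalue $\mu$ of $\mathcal{H}_n$.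
   Context: For an $m$-order $n$-dimensional real tensor $\mathcal{A}=(a_{i_1\cdots i_m})$ and $x\in\mathbb{C}^n$, $\mathcal{A}x^{m-1}$ is the vector with $i$-th component $\sum_{i_2,\dots,i_m=1}^n a_{i i_2\cdots i_m}x_{i_2}\cdots x_{i_m}$, and $x^{[m-1]}=(x_1^{m-1},\dots,x_n^{m-1})^\top$. A real number $\lambda$ is an $H$-eigenvalue of $\mathcal{A}$ if there is a nonzero $x\in\mathbb{R}^n$ with $\mathcal{A}x^{m-1}=\lambda x^{[m-1]}$. A real number $\mu$ is a $Z$-eigenvalue of $\mathcal{A}$ if there is a nonzero $x\in\mathbb{R}^n$ with $\mathcal{A}x^{m-1}=\mu\, x\,(x^\top x)^{\frac{m-2}{2}}$. *)

theory Defs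
  imports Complex_Main
begin

text \<open>An m-order n-dimensional real tensor is represented by its entry function on
index lists [i_1,...,i_m] with entries in {1..n}; vectors in R^n are functions
nat => real, of which only the components 1..n are relevant.\<close>

definition idx_lists :: "nat \<Rightarrow> nat \<Rightarrow> nat list set" where
  "idx_lists k n = {js. length js = k \<and> set js \<subseteq> {1..n}}"

definition tensor_apply :: "nat \<Rightarrow> nat \<Rightarrow> (nat list \<Rightarrow> real) \<Rightarrow> (nat \<Rightarrow> real) \<Rightarrow> nat \<Rightarrow> real" where
  "tensor_apply m n A x i = (\<Sum>js\<in>idx_lists (m - 1) n. A (i # js) * prod_list (map x js))"

definition nonzero_vec :: "nat \<Rightarrow> (nat \<Rightarrow> real) \<Rightarrow> bool" where
  "nonzero_vec n x \<longleftrightarrow> (\<exists>i\<in>{1..n}. x i \<noteq> 0)"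

definition H_eigenvalue :: "nat \<Rightarrow> nat \<Rightarrow> (nat list \<Rightarrow> real) \<Rightarrow> real \<Rightarrow> bool" where
  "H_eigenvalue m n A lam \<longleftrightarrow> (\<exists>x. nonzero_vec n x \<and>
     (\<forall>i\<in>{1..n}. tensor_apply m n A x i = lam * x i ^ (m - 1)))"

definition Z_eigenvalue :: "nat \<Rightarrow> nat \<Rightarrow> (nat list \<Rightarrow> real) \<Rightarrow> real \<Rightarrow> bool" where
  "Z_eigenvalue m n A mu \<longleftrightarrow> (\<exists>x. nonzero_vec n x \<and>
     (\<forall>i\<in>{1..n}. tensor_apply m n A x i =
        mu * x i * (\<Sum>j=1..n. x j ^ 2) powr ((real m - 2) / 2)))"

definition gen_hilbert :: "nat \<Rightarrow> real \<Rightarrow> nat list \<Rightarrow> real" where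
  "gen_hilbert m a js = 1 / (real (sum_list js) - real m + a)"

definition M_bound :: "nat \<Rightarrow> nat \<Rightarrow> real \<Rightarrow> real" where
  "M_bound m n a =
    (if a > 0 then 1 / a
     else if - real (m * (n - 1)) < a \<and> a < 0
       then 1 / min (a - of_int \<lfloor>a\<rfloor>) (1 + of_int \<lfloor>a\<rfloor> - a)
     else 1 / (- real (m * (n - 1)) - a))"

end

theory Submission
  imports Defs "HOL-Analysis.Convex"
begin

text \<open>Every entry of \<open>\<H>\<^sub>n\<close> is \<open>1/(s + a)\<close> with \<open>s \<in> {0..m(n-1)}\<close>, and \<open>M(a)\<close> bounds
  \<open>1/\<bar>s + a\<bar>\<close> uniformly. Evaluating the eigenvalue equation at a component \<open>x\<^sub>i\<close> of maximal
  modulus then gives \<open>\<bar>\<lambda>\<bar> \<bar>x\<^sub>i\<bar>\<^sup>m\<^sup>-\<^sup>1 \<le> M(a) (\<Sum>\<^sub>j \<bar>x\<^sub>j\<bar>)\<^sup>m\<^sup>-\<^sup>1 \<le> M(a) (n \<bar>x\<^sub>i\<bar>)\<^sup>m\<^sup>-\<^sup>1\<close>.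
  For Z-eigenvalues, \<open>\<Sum>\<^sub>j \<bar>x\<^sub>j\<bar> \<le> \<surd>n \<parallel>x\<parallel>\<^sub>2\<close> and \<open>\<parallel>x\<parallel>\<^sub>2 \<le> \<surd>n \<bar>x\<^sub>i\<bar>\<close> give the factor \<open>n\<^sup>m\<^sup>/\<^sup>2\<close> instead.\<close>

lemma idx_lists_0 [simp]: "idx_lists 0 n = {[]}"
  unfolding idx_lists_def by auto

lemma idx_lists_Suc: "idx_lists (Suc k) n = (\<lambda>(j, js). j # js) ` ({1..n} \<times> idx_lists k n)"
  unfolding idx_lists_def by (auto simp: length_Suc_conv image_iff)

lemma finite_idx_lists [simp]: "finite (idx_lists k n)"
  by (induction k) (auto simp: idx_lists_Suc)

lemma sum_idx_lists_prod_list: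
  fixes f :: "nat \<Rightarrow> 'a::comm_semiring_1"
  shows "(\<Sum>js\<in>idx_lists k n. prod_list (map f js)) = (\<Sum>j=1..n. f j) ^ k"
proof (induction k)
  case 0
  then show ?case by simp
next
  case (Suc k)
  have inj: "inj_on (\<lambda>(j, js). j # js) ({1..n} \<times> idx_lists k n)"
    by (auto simp: inj_on_def)
  have "(\<Sum>js\<in>idx_lists (Suc k) n. prod_list (map f js))
      = (\<Sum>(j, js)\<in>{1..n} \<times> idx_lists k n. f j * prod_list (map f js))"
    unfolding idx_lists_Suc by (subst sum.reindex[OF inj]) (simp add: split_def)
  also have "\<dots> = (\<Sum>j=1..n. f j) * (\<Sum>js\<in>idx_lists k n. prod_list (map f js))"
    by (simp only: sum_product sum.cartesian_product)
  finally show ?case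
    using Suc by simp
qed

lemma sum_list_idx_lists_bounds:
  "js \<in> idx_lists k n \<Longrightarrow> k \<le> sum_list js \<and> sum_list js \<le> k * n"
  unfolding idx_lists_def by (induction js arbitrary: k) auto

lemma min_frac_le_abs_of_int_add:
  fixes a :: real
  shows "min (frac a) (1 - frac a) \<le> \<bar>of_int k + a\<bar>"
proof -
  have eq: "of_int k + a = of_int (k + \<lfloor>a\<rfloor>) + frac a"
    by (simp add: frac_def)
  have "0 \<le> frac a" "frac a < 1"
    by (simp_all add: frac_lt_1)
  show ?thesis
  proof (cases "k + \<lfloor>a\<rfloor> \<ge> 0")
    case True
    then have "(0::real) \<le> of_int (k + \<lfloor>a\<rfloor>)"
      by simp
    with eq \<open>0 \<le> frac a\<close> show ?thesis
      by linarith
  next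
    case False
    then have "of_int (k + \<lfloor>a\<rfloor>) \<le> (-1::real)"
      by simp
    with eq \<open>frac a < 1\<close> show ?thesis
      by linarith
  qed
qed

lemma inverse_abs_add_le_M_bound:
  fixes a :: real
  assumes a: "\<not> (a \<in> \<int> \<and> a \<le> 0)" and s: "s \<le> m * (n - 1)"
  shows "1 / \<bar>real s + a\<bar> \<le> M_bound m n a"
proof -
  consider "a > 0" | "- real (m * (n - 1)) < a" "a < 0" | "a < - real (m * (n - 1))"
    using a by (metis Ints_0 Ints_minus Ints_of_nat linorder_neqE_linordered_idom not_le)
  then show ?thesis
  proof cases
    case 1
    then show ?thesis
      by (simp add: M_bound_def frac_le)
  next
    case 2
    have pos: "0 < min (frac a) (1 - frac a)"
      using 2 a frac_lt_1[of a] by (simp add: frac_gt_0_iff)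
    have "1 / \<bar>real s + a\<bar> \<le> 1 / min (frac a) (1 - frac a)"
      using min_frac_le_abs_of_int_add[of a "int s"] by (intro frac_le[OF _ _ pos]) simp_all
    moreover have "M_bound m n a = 1 / min (frac a) (1 - frac a)"
      using 2 unfolding M_bound_def frac_def by (simp del: of_nat_mult)
    ultimately show ?thesis
      by simp
  next
    case 3
    moreover from s have "real s \<le> real (m * (n - 1))"
      by linarith
    ultimately have "- real (m * (n - 1)) - a \<le> \<bar>real s + a\<bar>"
      by linarith
    with 3 show ?thesis
      by (simp add: M_bound_def frac_le)
  qed
qed

lemma abs_gen_hilbert_le_M_bound:
  assumes "\<not> (a \<in> \<int> \<and> a \<le> 0)" and "js \<in> idx_lists m n"
  shows "\<bar>gen_hilbert m a js\<bar> \<le> M_bound m n a"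
proof -
  define s where "s = sum_list js - m"
  have "m \<le> sum_list js" "sum_list js \<le> m * n"
    using sum_list_idx_lists_bounds[OF assms(2)] by auto
  then have "real (sum_list js) - real m = real s" and "s \<le> m * (n - 1)"
    by (auto simp: s_def diff_mult_distrib2)
  then show ?thesis
    using inverse_abs_add_le_M_bound[OF assms(1)] by (simp add: gen_hilbert_def abs_divide)
qed

lemma abs_prod_list_map:
  fixes x :: "'a \<Rightarrow> 'b::linordered_idom"
  shows "\<bar>prod_list (map x js)\<bar> = prod_list (map (\<lambda>j. \<bar>x j\<bar>) js)"
  by (induction js) (auto simp: abs_mult)

lemma abs_tensor_apply_le:
  assumes A: "\<forall>js\<in>idx_lists m n. \<bar>A js\<bar> \<le> M" and "m \<ge> 1" and i: "i \<in> {1..n}"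
  shows "\<bar>tensor_apply m n A x i\<bar> \<le> M * (\<Sum>j=1..n. \<bar>x j\<bar>) ^ (m - 1)"
proof -
  have "\<bar>tensor_apply m n A x i\<bar> \<le> (\<Sum>js\<in>idx_lists (m - 1) n. \<bar>A (i # js) * prod_list (map x js)\<bar>)"
    unfolding tensor_apply_def by (rule sum_abs)
  also have "\<dots> \<le> (\<Sum>js\<in>idx_lists (m - 1) n. M * prod_list (map (\<lambda>j. \<bar>x j\<bar>) js))"
  proof (rule sum_mono)
    fix js assume "js \<in> idx_lists (m - 1) n"
    then have "i # js \<in> idx_lists m n"
      using \<open>m \<ge> 1\<close> i by (auto simp: idx_lists_def)
    then have "\<bar>A (i # js)\<bar> \<le> M"
      using A by blast
    moreover have "0 \<le> prod_list (map (\<lambda>j. \<bar>x j\<bar>) js)"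
      by (induction js) auto
    ultimately show "\<bar>A (i # js) * prod_list (map x js)\<bar> \<le> M * prod_list (map (\<lambda>j. \<bar>x j\<bar>) js)"
      by (simp add: abs_mult abs_prod_list_map mult_right_mono)
  qed
  also have "\<dots> = M * (\<Sum>j=1..n. \<bar>x j\<bar>) ^ (m - 1)"
    by (simp add: sum_distrib_left[symmetric] sum_idx_lists_prod_list)
  finally show ?thesis .
qed

lemma nonzero_vec_max_component:
  assumes "nonzero_vec n x"
  obtains i where "i \<in> {1..n}" "0 < \<bar>x i\<bar>" "\<And>j. j \<in> {1..n} \<Longrightarrow> \<bar>x j\<bar> \<le> \<bar>x i\<bar>"
proof -
  obtain k where k: "k \<in> {1..n}" "x k \<noteq> 0"
    using assms unfolding nonzero_vec_def by auto
  have "Max ((\<lambda>j. \<bar>x j\<bar>) ` {1..n}) \<in> (\<lambda>j. \<bar>x j\<bar>) ` {1..n}"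
    using k(1) by (intro Max_in) auto
  then obtain i where i: "i \<in> {1..n}" "\<bar>x i\<bar> = Max ((\<lambda>j. \<bar>x j\<bar>) ` {1..n})"
    by auto
  then have "\<And>j. j \<in> {1..n} \<Longrightarrow> \<bar>x j\<bar> \<le> \<bar>x i\<bar>"
    by simp
  moreover have "0 < \<bar>x i\<bar>"
    using \<open>\<And>j. j \<in> {1..n} \<Longrightarrow> \<bar>x j\<bar> \<le> \<bar>x i\<bar>\<close>[OF k(1)] k(2) by linarith
  ultimately show ?thesis
    using that i(1) by blast
qed

lemma sum_abs_le_sqrt_card_mult_sqrt_sum_squares:
  fixes f :: "'a \<Rightarrow> real"
  shows "(\<Sum>i\<in>I. \<bar>f i\<bar>) \<le> sqrt (real (card I)) * sqrt (\<Sum>i\<in>I. (f i)\<^sup>2)"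
proof -
  have "(\<Sum>i\<in>I. \<bar>f i\<bar>)\<^sup>2 \<le> real (card I) * (\<Sum>i\<in>I. (f i)\<^sup>2)"
    using sum_squared_le_sum_of_squares[of "\<lambda>i. \<bar>f i\<bar>" I] by (simp add: mult.commute)
  then have "(\<Sum>i\<in>I. \<bar>f i\<bar>) \<le> sqrt (real (card I) * (\<Sum>i\<in>I. (f i)\<^sup>2))"
    by (rule real_le_rsqrt)
  then show ?thesis
    by (simp add: real_sqrt_mult)
qed

lemma sqrt_sum_squares_le_sqrt_card_mult_bound:
  fixes f :: "'a \<Rightarrow> real"
  assumes "\<And>i. i \<in> I \<Longrightarrow> \<bar>f i\<bar> \<le> t"
  shows "sqrt (\<Sum>i\<in>I. (f i)\<^sup>2) \<le> sqrt (real (card I)) * t"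
proof (cases "I = {}")
  case False
  then have "0 \<le> t"
    using assms by fastforce
  have "(\<Sum>i\<in>I. (f i)\<^sup>2) \<le> real (card I) * t\<^sup>2"
    using assms \<open>0 \<le> t\<close> by (intro sum_bounded_above) (metis abs_le_square_iff abs_of_nonneg)
  then have "sqrt (\<Sum>i\<in>I. (f i)\<^sup>2) \<le> sqrt (real (card I) * t\<^sup>2)"
    by (rule real_sqrt_le_mono)
  with \<open>0 \<le> t\<close> show ?thesis
    by (simp add: real_sqrt_mult)
qed simp

lemma powr_half_of_nat:
  fixes x :: real
  assumes "0 < x"
  shows "x powr (real k / 2) = sqrt x ^ k"
proof -
  have "x powr (real k / 2) = (x powr (1 / 2)) powr real k"
    by (simp add: powr_powr)
  also have "\<dots> = sqrt x ^ k"
    using assms by (simp add: powr_half_sqrt powr_realpow)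
  finally show ?thesis .
qed

lemma entry_bound_nonneg:
  fixes A :: "nat list \<Rightarrow> real"
  assumes "\<forall>js\<in>idx_lists m n. \<bar>A js\<bar> \<le> M" and "i \<in> {1..n}"
  shows "0 \<le> M"
proof -
  have "replicate m i \<in> idx_lists m n"
    using assms(2) by (cases m) (auto simp: idx_lists_def)
  then have "\<bar>A (replicate m i)\<bar> \<le> M"
    using assms(1) by blast
  then show ?thesis
    using abs_ge_zero[of "A (replicate m i)"] by linarith
qed

lemma H_eigenvalue_abs_le:
  assumes A: "\<forall>js\<in>idx_lists m n. \<bar>A js\<bar> \<le> M" and "m \<ge> 1" and "H_eigenvalue m n A lam"
  shows "\<bar>lam\<bar> \<le> M * real n ^ (m - 1)"
proof -
  obtain x where nz: "nonzero_vec n x"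
    and eq: "\<forall>i\<in>{1..n}. tensor_apply m n A x i = lam * x i ^ (m - 1)"
    using assms(3) unfolding H_eigenvalue_def by blast
  obtain i where i: "i \<in> {1..n}" "0 < \<bar>x i\<bar>" "\<And>j. j \<in> {1..n} \<Longrightarrow> \<bar>x j\<bar> \<le> \<bar>x i\<bar>"
    using nonzero_vec_max_component[OF nz] by blast
  define t where "t = \<bar>x i\<bar>"
  have "0 \<le> M"
    using A i(1) by (rule entry_bound_nonneg)
  have "(\<Sum>j=1..n. \<bar>x j\<bar>) \<le> real n * t"
    using sum_bounded_above[of "{1..n}" "\<lambda>j. \<bar>x j\<bar>" t] i(3) by (simp add: t_def)
  have "\<bar>lam\<bar> * t ^ (m - 1) = \<bar>tensor_apply m n A x i\<bar>"
    using eq i(1) by (simp add: t_def abs_mult power_abs)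
  also have "\<dots> \<le> M * (\<Sum>j=1..n. \<bar>x j\<bar>) ^ (m - 1)"
    using A \<open>m \<ge> 1\<close> i(1) by (rule abs_tensor_apply_le)
  also have "\<dots> \<le> M * (real n * t) ^ (m - 1)"
    using \<open>0 \<le> M\<close> \<open>(\<Sum>j=1..n. \<bar>x j\<bar>) \<le> real n * t\<close>
    by (intro mult_left_mono power_mono) (auto intro: sum_nonneg)
  also have "\<dots> = (M * real n ^ (m - 1)) * t ^ (m - 1)"
    by (simp add: power_mult_distrib)
  finally show ?thesis
    using i(2) by (simp add: t_def)
qed

lemma Z_eigenvector_component_bound:
  assumes A: "\<forall>js\<in>idx_lists m n. \<bar>A js\<bar> \<le> M" and "0 \<le> M" and "m \<ge> 2" and i: "i \<in> {1..n}"
    and eq: "tensor_apply m n A x i = mu * x i * (\<Sum>j=1..n. x j ^ 2) powr ((real m - 2) / 2)"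
    and pos: "0 < (\<Sum>j=1..n. x j ^ 2)"
  shows "\<bar>mu\<bar> * \<bar>x i\<bar> \<le> M * sqrt (real n) ^ (m - 1) * sqrt (\<Sum>j=1..n. x j ^ 2)"
proof -
  define q where "q = sqrt (\<Sum>j=1..n. x j ^ 2)"
  have "0 < q"
    using pos by (simp add: q_def)
  have "\<bar>mu\<bar> * \<bar>x i\<bar> * q ^ (m - 2) = \<bar>tensor_apply m n A x i\<bar>"
    using eq \<open>0 < q\<close> \<open>m \<ge> 2\<close> powr_half_of_nat[of "q\<^sup>2" "m - 2"]
    by (simp add: q_def abs_mult of_nat_diff)
  also have "\<dots> \<le> M * (\<Sum>j=1..n. \<bar>x j\<bar>) ^ (m - 1)"
    using A _ i by (rule abs_tensor_apply_le) (use \<open>m \<ge> 2\<close> in simp)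
  also have "\<dots> \<le> M * (sqrt (real n) * q) ^ (m - 1)"
    using \<open>0 \<le> M\<close> sum_abs_le_sqrt_card_mult_sqrt_sum_squares[of x "{1..n}"]
    by (intro mult_left_mono power_mono) (auto simp: q_def intro: sum_nonneg)
  also have "\<dots> = (M * sqrt (real n) ^ (m - 1) * q) * q ^ (m - 2)"
    using \<open>m \<ge> 2\<close> by (simp add: power_mult_distrib numeral_2_eq_2 flip: power_Suc Suc_diff_Suc)
  finally show ?thesis
    using \<open>0 < q\<close> by (simp add: q_def)
qed

lemma Z_eigenvalue_abs_le:
  assumes A: "\<forall>js\<in>idx_lists m n. \<bar>A js\<bar> \<le> M" and "m \<ge> 2" and "Z_eigenvalue m n A mu"
  shows "\<bar>mu\<bar> \<le> M * real n powr (real m / 2)"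
proof -
  obtain x where nz: "nonzero_vec n x" and eq: "\<forall>i\<in>{1..n}. tensor_apply m n A x i =
      mu * x i * (\<Sum>j=1..n. x j ^ 2) powr ((real m - 2) / 2)"
    using assms(3) unfolding Z_eigenvalue_def by blast
  obtain i where i: "i \<in> {1..n}" "0 < \<bar>x i\<bar>" "\<And>j. j \<in> {1..n} \<Longrightarrow> \<bar>x j\<bar> \<le> \<bar>x i\<bar>"
    using nonzero_vec_max_component[OF nz] by blast
  define t where "t = \<bar>x i\<bar>"
  define q where "q = sqrt (\<Sum>j=1..n. x j ^ 2)"
  have "0 \<le> M"
    using A i(1) by (rule entry_bound_nonneg)
  have "t \<le> q"
    unfolding q_def using member_le_sum[of i "{1..n}" "\<lambda>j. x j ^ 2"] i(1)
    by (intro real_le_rsqrt) (simp add: t_def)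
  then have "0 < q"
    using i(2) by (simp add: t_def)
  then have "0 < (\<Sum>j=1..n. x j ^ 2)"
    by (simp add: q_def)
  have "\<bar>mu\<bar> * t \<le> M * sqrt (real n) ^ (m - 1) * q"
    unfolding t_def q_def using A \<open>0 \<le> M\<close> \<open>m \<ge> 2\<close> i(1) eq \<open>0 < (\<Sum>j=1..n. x j ^ 2)\<close>
    by (intro Z_eigenvector_component_bound) auto
  also have "\<dots> \<le> M * sqrt (real n) ^ (m - 1) * (sqrt (real n) * t)"
    using \<open>0 \<le> M\<close> sqrt_sum_squares_le_sqrt_card_mult_bound[of "{1..n}" x t] i(3)
    by (intro mult_left_mono) (auto simp: q_def t_def)
  also have "\<dots> = M * (sqrt (real n) ^ (m - 1) * sqrt (real n)) * t"
    by simp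
  also have "\<dots> = M * real n powr (real m / 2) * t"
    using \<open>m \<ge> 2\<close> i(1) powr_half_of_nat[of "real n" m] by (simp flip: power_Suc2)
  finally show ?thesis
    using i(2) by (simp add: t_def)
qed

theorem theorem3p4:
  fixes m n :: nat and a :: real
  assumes "m \<ge> 2" and "n \<ge> 1"
    and "\<not> (a \<in> \<int> \<and> a \<le> 0)"
  shows "(even m \<longrightarrow> (\<forall>lam. H_eigenvalue m n (gen_hilbert m a) lam \<longrightarrow>
             \<bar>lam\<bar> \<le> M_bound m n a * real n ^ (m - 1)))
       \<and> (\<forall>mu. Z_eigenvalue m n (gen_hilbert m a) mu \<longrightarrow>
             \<bar>mu\<bar> \<le> M_bound m n a * real n powr (real m / 2))"
proof -
  have entries: "\<forall>js\<in>idx_lists m n. \<bar>gen_hilbert m a js\<bar> \<le> M_bound m n a"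
    using abs_gen_hilbert_le_M_bound[OF assms(3)] by blast
  show ?thesis
    using H_eigenvalue_abs_le[OF entries] Z_eigenvalue_abs_le[OF entries] \<open>m \<ge> 2\<close> by simp
qed

end
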